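(* Let $k\ge2$ be an integer and $n\in\mathbb Z$. Then $L_k^{(n)}L_k^{(0)}=L_k^{(0)}L_k^{(n)}$.
   Context: Fix an integer $k\ge2$. Let $Q_k$ be the $k\times k$ matrix whose first row is all ones, with $(Q_k)_{i+1,i}=1$ for $1\le i\le k-1$ and all other entries $0$, and for $r\in\mathbb Z$ let $Q_k^r$ denote its $r$-th power. The generalized Lucas sequence of order $k$, $(l_{k,n})_{n\in\mathbb Z}$, is the two-sided sequence satisfying $l_{k,n+k}=l_{k,n+k-1}+\dots+l_{k,n}$ for all $n\in\mathbb Z$ with initial values $l_{k,r}=\operatorname{trace}(Q_k^r)$ for $0\le r\le k-1$ (so $l_{k,0}=k$ and $l_{k,r}=2^r-1$ for $1\le r\le k-1$). For $n\in\mathbb Z$ the generalized Lucas matrix $L_k^{(n)}$ is the $k\times k$ matrix with entries $(L_k^{(n)})_{i,1}=l_{k,k+n-i}$ and $(L_k^{(n)})_{i,j}=\sum_{m=n-i+j-1}^{k+n-i-1} l_{k,m}$ for $2\le j\le k$, $1\le i\le k$. *)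

theory Defs
  imports "Jordan_Normal_Form.Matrix"
begin

(* The generalized Lucas sequence of order k, as a two-sided sequence Z -> Z:
   the unique f with f(n+k) = f(n+k-1) + ... + f(n) for all integers n,
   f 0 = k and f r = 2^r - 1 for 1 <= r <= k-1 (= trace (Q_k^r)). *)
definition gen_lucas :: "nat \<Rightarrow> int \<Rightarrow> int" where
  "gen_lucas k = (THE f. (\<forall>n::int. f (n + int k) = (\<Sum>j<k. f (n + int j)))
                       \<and> f 0 = int k
                       \<and> (\<forall>r::nat. 1 \<le> r \<and> r < k \<longrightarrow> f (int r) = 2 ^ r - 1))"

(* The generalized Lucas matrix L_k^{(n)}, k x k, with 0-based indices
   i' = i - 1, j' = j - 1 relative to the paper's 1-based (i,j). *)
definition lucas_mat :: "nat \<Rightarrow> int \<Rightarrow> int mat" where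
  "lucas_mat k n = mat k k (\<lambda>(i', j').
     (let i = int i' + 1; j = int j' + 1 in
      if j = 1 then gen_lucas k (int k + n - i)
      else (\<Sum>m\<in>{n - i + j - 1 .. int k + n - i - 1}. gen_lucas k m)))"

end

(* Let L n be the k x k matrix with (0-based) entries sum_{t=j}^{k-1} l(n-1-i+t).  By the recurrence
   its first column is l(k+n-1-i), so L n is the generalized Lucas matrix.  The recurrence also gives
   L (n+1) = Q_k L n and L 1 = L 0 Q_k, so Q_k commutes with L 0; hence L n = Q_k^n L 0 commutes
   with L 0 for n >= 0, and for n < 0 the same follows because left multiplication by Q_k is
   injective. *)
theory Submission
  imports Defs
begin

definition sum_recurrence :: "nat \<Rightarrow> (int \<Rightarrow> 'a::comm_monoid_add) \<Rightarrow> bool" where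
  "sum_recurrence k f \<longleftrightarrow> (\<forall>n. f (n + int k) = (\<Sum>j<k. f (n + int j)))"

lemma sum_recurrence_Suc_shift:
  assumes "sum_recurrence (Suc k) f"
  shows "f (n + 1 + int k) = f n + (\<Sum>j<k. f (n + 1 + int j))"
  using assms[unfolded sum_recurrence_def, rule_format, of n]
  by (simp only: sum.lessThan_Suc_shift) (simp add: ac_simps)

lemma sum_recurrence_unique:
  fixes f g :: "int \<Rightarrow> 'a::ab_group_add"
  assumes f: "sum_recurrence k f" and g: "sum_recurrence k g" and k: "k \<ge> 1"
    and initial: "\<And>r. r < k \<Longrightarrow> f (int r) = g (int r)"
  shows "f = g"
proof
  fix n
  obtain k' where k': "k = Suc k'" using k by (cases k) auto
  define window where "window m \<longleftrightarrow> (\<forall>j<k. f (m + int j) = g (m + int j))" for m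
  have window_Suc: "window (m + 1) \<longleftrightarrow> f (m + 1 + int k') = g (m + 1 + int k') \<and>
      (\<forall>j<k'. f (m + 1 + int j) = g (m + 1 + int j))" for m
    unfolding window_def k' by (auto simp: less_Suc_eq)
  have window_pred: "window m \<longleftrightarrow> f m = g m \<and> (\<forall>j<k'. f (m + 1 + int j) = g (m + 1 + int j))"
    for m
    unfolding window_def k' by (auto simp: less_Suc_eq_0_disj add.assoc)
  have "window m" for m
  proof (induction m rule: int_induct[where k = 0])
    case base
    then show ?case using initial by (simp add: window_def)
  next
    case (step1 m)
    then show ?case
      using sum_recurrence_Suc_shift[OF f[unfolded k'], of m]
        sum_recurrence_Suc_shift[OF g[unfolded k'], of m]
      unfolding window_Suc[of m] window_pred[of m] by simp
  next
    case (step2 m)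
    then have "window (m - 1 + 1)" by simp
    then show ?case
      using sum_recurrence_Suc_shift[OF f[unfolded k'], of "m - 1"]
        sum_recurrence_Suc_shift[OF g[unfolded k'], of "m - 1"]
      unfolding window_pred[of "m - 1"] window_Suc[of "m - 1"] by simp
  qed
  then show "f n = g n" by (simp add: window_pred)
qed

(* The k = 0 branch only secures termination; for k = 0 the recurrence forces the zero sequence. *)
function sum_recurrence_seq :: "nat \<Rightarrow> (nat \<Rightarrow> 'a::ab_group_add) \<Rightarrow> int \<Rightarrow> 'a" where
  "sum_recurrence_seq k a n =
    (if 0 \<le> n \<and> n < int k then a (nat n)
     else if k = 0 then 0
     else if n \<ge> int k then (\<Sum>j<k. sum_recurrence_seq k a (n - int k + int j))
     else sum_recurrence_seq k a (n + int k) - (\<Sum>j\<in>{1..<k}. sum_recurrence_seq k a (n + int j)))"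
  by auto
termination
  by (relation "measure (\<lambda>(k, a, n). if n \<ge> 0 then nat n else k + nat (- n))") auto

declare sum_recurrence_seq.simps[simp del]

lemma sum_recurrence_seq_initial: "r < k \<Longrightarrow> sum_recurrence_seq k a (int r) = a r"
  by (simp add: sum_recurrence_seq.simps)

lemma sum_recurrence_sum_recurrence_seq: "sum_recurrence k (sum_recurrence_seq k a)"
  unfolding sum_recurrence_def
proof
  fix n
  show "sum_recurrence_seq k a (n + int k) = (\<Sum>j<k. sum_recurrence_seq k a (n + int j))"
  proof (cases "k = 0")
    case True
    then show ?thesis by (auto simp: sum_recurrence_seq.simps[of 0])
  next
    case k: False
    show ?thesis
    proof (cases "n \<ge> 0")
      case True
      then show ?thesis using k by (subst sum_recurrence_seq.simps) simp
    next
      case False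
      have "sum_recurrence_seq k a n = sum_recurrence_seq k a (n + int k)
          - (\<Sum>j\<in>{1..<k}. sum_recurrence_seq k a (n + int j))"
        using k False by (subst sum_recurrence_seq.simps) simp
      moreover have "{..<k} = insert 0 {1..<k}" using k by auto
      ultimately show ?thesis by simp
    qed
  qed
qed

lemma sum_recurrence_gen_lucas:
  assumes "k \<ge> 1"
  shows "sum_recurrence k (gen_lucas k)"
proof -
  define a where "a r = (if r = 0 then int k else 2 ^ r - 1)" for r
  have "gen_lucas k = sum_recurrence_seq k a"
    unfolding gen_lucas_def sum_recurrence_def[symmetric]
  proof (rule the_equality)
    show "sum_recurrence k (sum_recurrence_seq k a) \<and> sum_recurrence_seq k a 0 = int k \<and>
        (\<forall>r. 1 \<le> r \<and> r < k \<longrightarrow> sum_recurrence_seq k a (int r) = 2 ^ r - 1)"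
      using assms sum_recurrence_seq_initial[of _ k a] sum_recurrence_seq_initial[of 0 k a]
        sum_recurrence_sum_recurrence_seq[of k a]
      by (auto simp: a_def)
  next
    fix f
    assume f: "sum_recurrence k f \<and> f 0 = int k \<and>
      (\<forall>r. 1 \<le> r \<and> r < k \<longrightarrow> f (int r) = 2 ^ r - 1)"
    show "f = sum_recurrence_seq k a"
    proof (rule sum_recurrence_unique)
      fix r assume "r < k"
      moreover have "f (int r) = a r" using f \<open>r < k\<close> by (cases "r = 0") (auto simp: a_def)
      ultimately show "f (int r) = sum_recurrence_seq k a (int r)"
        by (simp add: sum_recurrence_seq_initial)
    qed (use f assms sum_recurrence_sum_recurrence_seq in auto)
  qed
  then show ?thesis by (simp add: sum_recurrence_sum_recurrence_seq)
qed

lemma sum_recurrence_downward: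
  assumes "sum_recurrence k f"
  shows "(\<Sum>l<k. f (n - 1 - int l)) = f n"
proof -
  have "f n = (\<Sum>j<k. f (n - int k + int j))"
    using assms[unfolded sum_recurrence_def, rule_format, of "n - int k"] by simp
  also have "\<dots> = (\<Sum>l<k. f (n - 1 - int l))"
    by (rule sum.reindex_bij_witness[where i="\<lambda>j. k - 1 - j" and j="\<lambda>j. k - 1 - j"])
      (auto simp: of_nat_diff algebra_simps)
  finally show ?thesis by simp
qed

lemma sum_int_interval_shift:
  "(\<Sum>m\<in>{c + int j .. c + int k - 1}. g m) = (\<Sum>t\<in>{j..<k}. g (c + int t))"
proof -
  have "{c + int j .. c + int k - 1} \<subseteq> (\<lambda>t. c + int t) ` {j..<k}"
  proof
    fix m assume "m \<in> {c + int j .. c + int k - 1}"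
    then show "m \<in> (\<lambda>t. c + int t) ` {j..<k}"
      by (intro image_eqI[where x = "nat (m - c)"]) auto
  qed
  then have "{c + int j .. c + int k - 1} = (\<lambda>t. c + int t) ` {j..<k}" by auto
  then show ?thesis by (simp add: sum.reindex inj_on_def)
qed

definition companion_mat :: "nat \<Rightarrow> 'a::comm_ring_1 mat" where
  "companion_mat k = mat k k (\<lambda>(i, j). if i = 0 \<or> i = Suc j then 1 else 0)"

definition lucas_mat_of :: "(int \<Rightarrow> 'a::comm_ring_1) \<Rightarrow> nat \<Rightarrow> int \<Rightarrow> 'a mat" where
  "lucas_mat_of f k n = mat k k (\<lambda>(i, j). \<Sum>t\<in>{j..<k}. f (n - 1 - int i + int t))"

lemma companion_mat_carrier [simp]: "companion_mat k \<in> carrier_mat k k"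
  by (simp add: companion_mat_def)

lemma lucas_mat_of_carrier [simp]: "lucas_mat_of f k n \<in> carrier_mat k k"
  by (simp add: lucas_mat_of_def)

lemma lucas_mat_eq_lucas_mat_of:
  assumes "k \<ge> 1"
  shows "lucas_mat k n = lucas_mat_of (gen_lucas k) k n"
proof (rule eq_matI)
  fix i j
  assume "i < dim_row (lucas_mat_of (gen_lucas k) k n)"
    "j < dim_col (lucas_mat_of (gen_lucas k) k n)"
  then have ij: "i < k" "j < k" by (auto simp: lucas_mat_of_def)
  show "lucas_mat k n $$ (i, j) = lucas_mat_of (gen_lucas k) k n $$ (i, j)"
  proof (cases "j = 0")
    case True
    have "gen_lucas k (int k + n - (int i + 1)) = gen_lucas k ((n - 1 - int i) + int k)"
      by (simp add: algebra_simps)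
    also have "\<dots> = (\<Sum>t<k. gen_lucas k (n - 1 - int i + int t))"
      using sum_recurrence_gen_lucas[OF assms] by (simp add: sum_recurrence_def)
    finally show ?thesis
      using ij True by (simp add: lucas_mat_def lucas_mat_of_def atLeast0LessThan)
  next
    case False
    have "{n - (int i + 1) + (int j + 1) - 1 .. int k + n - (int i + 1) - 1}
       = {(n - 1 - int i) + int j .. (n - 1 - int i) + int k - 1}"
      by (simp add: algebra_simps)
    moreover have "lucas_mat k n $$ (i, j)
        = (\<Sum>m\<in>{n - (int i + 1) + (int j + 1) - 1 .. int k + n - (int i + 1) - 1}. gen_lucas k m)"
      using ij False by (simp add: lucas_mat_def Let_def)
    ultimately have "lucas_mat k n $$ (i, j) = (\<Sum>t\<in>{j..<k}. gen_lucas k (n - 1 - int i + int t))"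
      by (simp only: sum_int_interval_shift)
    then show ?thesis using ij by (simp add: lucas_mat_of_def)
  qed
qed (simp_all add: lucas_mat_def lucas_mat_of_def)

lemma companion_mat_mult_index:
  assumes "M \<in> carrier_mat k k" "i < k" "j < k"
  shows "(companion_mat k * M) $$ (i, j) = (if i = 0 then \<Sum>l<k. M $$ (l, j) else M $$ (i - 1, j))"
proof -
  have "(companion_mat k * M) $$ (i, j)
      = (\<Sum>l<k. (if i = 0 \<or> i = Suc l then 1 else 0) * M $$ (l, j))"
    using assms by (auto simp: companion_mat_def scalar_prod_def atLeast0LessThan intro: sum.cong)
  also have "\<dots> = (if i = 0 then \<Sum>l<k. M $$ (l, j) else M $$ (i - 1, j))"
  proof (cases "i = 0")
    case False
    then have "(\<Sum>l<k. (if i = Suc l then 1 else 0) * M $$ (l, j))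
        = (\<Sum>l<k. if l = i - 1 then M $$ (l, j) else 0)"
      by (intro sum.cong) auto
    then show ?thesis using False assms by auto
  qed simp
  finally show ?thesis .
qed

lemma mult_companion_mat_index:
  assumes "M \<in> carrier_mat k k" "i < k" "j < k"
  shows "(M * companion_mat k) $$ (i, j) = M $$ (i, 0) + (if Suc j < k then M $$ (i, Suc j) else 0)"
proof -
  have "(M * companion_mat k) $$ (i, j)
      = (\<Sum>l<k. (if l = 0 then M $$ (i, l) else 0) + (if l = Suc j then M $$ (i, l) else 0))"
    using assms by (auto simp: companion_mat_def scalar_prod_def atLeast0LessThan intro: sum.cong)
  then show ?thesis using assms by (simp add: sum.distrib sum.delta)
qed

(* Row i + 1 of Q_k A is row i of A, and row 0 is the sum of all rows, which recovers the last one. *)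
lemma inj_on_companion_mat_mult: "inj_on ((*) (companion_mat k)) (carrier_mat k k)"
proof (rule inj_onI)
  fix A B :: "'a::comm_ring_1 mat"
  assume A: "A \<in> carrier_mat k k" and B: "B \<in> carrier_mat k k"
    and eq: "companion_mat k * A = companion_mat k * B"
  show "A = B"
  proof (rule eq_matI)
    fix i j assume "i < dim_row B" "j < dim_col B"
    then have ij: "i < k" "j < k" using B by auto
    have shifted_rows: "A $$ (l, j) = B $$ (l, j)" if "Suc l < k" for l
      using arg_cong[OF eq, of "\<lambda>M. M $$ (Suc l, j)"] that ij
      by (simp add: companion_mat_mult_index[OF A] companion_mat_mult_index[OF B])
    obtain k' where k': "k = Suc k'" using ij by (cases k) auto
    have "(\<Sum>l<k. A $$ (l, j)) = (\<Sum>l<k. B $$ (l, j))"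
      using arg_cong[OF eq, of "\<lambda>M. M $$ (0, j)"] ij
      by (simp add: companion_mat_mult_index[OF A] companion_mat_mult_index[OF B])
    moreover have "(\<Sum>l<k'. A $$ (l, j)) = (\<Sum>l<k'. B $$ (l, j))"
      using shifted_rows k' by simp
    ultimately have "A $$ (k', j) = B $$ (k', j)" using k' by simp
    then show "A $$ (i, j) = B $$ (i, j)"
      using shifted_rows ij k' by (cases "i = k'") auto
  qed (use A B in auto)
qed

lemma lucas_mat_of_succ:
  assumes "sum_recurrence k f"
  shows "lucas_mat_of f k (n + 1) = companion_mat k * lucas_mat_of f k n"
proof (rule eq_matI)
  fix i j
  assume "i < dim_row (companion_mat k * lucas_mat_of f k n)"
    "j < dim_col (companion_mat k * lucas_mat_of f k n)"
  then have ij: "i < k" "j < k" by (auto simp: companion_mat_def lucas_mat_of_def)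
  show "lucas_mat_of f k (n + 1) $$ (i, j) = (companion_mat k * lucas_mat_of f k n) $$ (i, j)"
  proof (cases "i = 0")
    case True
    have "(\<Sum>l<k. lucas_mat_of f k n $$ (l, j))
        = (\<Sum>l<k. \<Sum>t\<in>{j..<k}. f (n - 1 - int l + int t))"
      using ij by (intro sum.cong) (auto simp: lucas_mat_of_def)
    also have "\<dots> = (\<Sum>t\<in>{j..<k}. \<Sum>l<k. f ((n + int t) - 1 - int l))"
      by (subst sum.swap) (simp add: algebra_simps)
    also have "\<dots> = (\<Sum>t\<in>{j..<k}. f (n + int t))"
      by (simp add: sum_recurrence_downward[OF assms])
    finally show ?thesis
      using True ij by (simp add: companion_mat_mult_index lucas_mat_of_def)
  next
    case False
    then have "int (i - 1) = int i - 1" by auto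
    then show ?thesis
      using False ij by (simp add: companion_mat_mult_index lucas_mat_of_def algebra_simps)
  qed
qed (simp_all add: lucas_mat_of_def companion_mat_def)

lemma lucas_mat_of_one:
  assumes "sum_recurrence k f"
  shows "lucas_mat_of f k 1 = lucas_mat_of f k 0 * companion_mat k"
proof (rule eq_matI)
  fix i j
  assume "i < dim_row (lucas_mat_of f k 0 * companion_mat k)"
    "j < dim_col (lucas_mat_of f k 0 * companion_mat k)"
  then have ij: "i < k" "j < k" by (auto simp: companion_mat_def lucas_mat_of_def)
  have "lucas_mat_of f k 0 $$ (i, 0) = (\<Sum>t<k. f (- 1 - int i + int t))"
    using ij by (simp add: lucas_mat_of_def atLeast0LessThan)
  also have "\<dots> = f (- 1 - int i + int k)"
    using assms by (simp add: sum_recurrence_def)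
  finally have first_col: "lucas_mat_of f k 0 $$ (i, 0) = f (- 1 - int i + int k)" .
  have "(lucas_mat_of f k 0 * companion_mat k) $$ (i, j)
      = f (- 1 - int i + int k) + (\<Sum>t\<in>{Suc j..<k}. f (- 1 - int i + int t))"
    using ij by (simp add: mult_companion_mat_index first_col) (simp add: lucas_mat_of_def)
  also have "\<dots> = (\<Sum>t\<in>{Suc j..<Suc k}. f (- 1 - int i + int t))"
    using ij by (simp add: sum.atLeastLessThan_Suc add.commute)
  also have "\<dots> = (\<Sum>t\<in>{j..<k}. f (- int i + int t))"
    by (subst sum.shift_bounds_Suc_ivl) (simp add: algebra_simps)
  finally show "lucas_mat_of f k 1 $$ (i, j) = (lucas_mat_of f k 0 * companion_mat k) $$ (i, j)"
    using ij by (simp add: lucas_mat_of_def)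
qed (simp_all add: lucas_mat_of_def companion_mat_def)

lemma orbit_mult_commute:
  fixes Q :: "'a::semiring_1 mat" and M :: "int \<Rightarrow> 'a mat"
  assumes Q: "Q \<in> carrier_mat k k" and M: "\<And>n. M n \<in> carrier_mat k k"
    and step: "\<And>n. M (n + 1) = Q * M n" and QM: "Q * M 0 = M 0 * Q"
    and cancel: "inj_on ((*) Q) (carrier_mat k k)"
  shows "M n * M 0 = M 0 * M n"
proof (induction n rule: int_induct[where k = 0])
  case base
  show ?case ..
next
  case (step1 i)
  have "M (i + 1) * M 0 = Q * (M i * M 0)"
    by (simp add: step assoc_mult_mat[OF Q M M])
  also have "\<dots> = (Q * M 0) * M i"
    by (simp add: step1.IH assoc_mult_mat[OF Q M M])
  also have "\<dots> = M 0 * M (i + 1)"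
    by (simp add: QM step assoc_mult_mat[OF M Q M])
  finally show ?case .
next
  case (step2 i)
  have "Q * (M (i - 1) * M 0) = M i * M 0"
    using step[of "i - 1"] by (simp add: assoc_mult_mat[OF Q M M])
  also have "\<dots> = M 0 * M i" by (rule step2.IH)
  also have "\<dots> = Q * (M 0 * M (i - 1))"
    using step[of "i - 1"] by (simp add: QM flip: assoc_mult_mat[OF M Q M] assoc_mult_mat[OF Q M M])
  finally show ?case
    by (rule inj_onD[OF cancel]) (auto intro: mult_carrier_mat M)
qed

theorem corollary1:
  fixes k :: nat and n :: int
  assumes "k \<ge> 2"
  shows "lucas_mat k n * lucas_mat k 0 = lucas_mat k 0 * lucas_mat k n"
proof -
  have k: "k \<ge> 1" using assms by simp
  let ?L = "lucas_mat_of (gen_lucas k) k"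
  have rec: "sum_recurrence k (gen_lucas k)" by (rule sum_recurrence_gen_lucas[OF k])
  have "companion_mat k * ?L 0 = ?L 0 * companion_mat k"
    using lucas_mat_of_succ[OF rec, of 0] lucas_mat_of_one[OF rec] by simp
  then have "?L n * ?L 0 = ?L 0 * ?L n"
    by (rule orbit_mult_commute[where M = ?L, OF companion_mat_carrier lucas_mat_of_carrier
          lucas_mat_of_succ[OF rec] _ inj_on_companion_mat_mult])
  then show ?thesis by (simp add: lucas_mat_eq_lucas_mat_of[OF k])
qed

end
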